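(* Let $\mathbb F_q$ be a finite field with $q>2$ elements, $\mathbb F_q^*=\mathbb F_q\setminus\{0\}$, and let $\mathcal{SC}\subset\mathbb Z[\mathrm{SL}_2(\mathbb F_q)]$ be the $\mathbb Z$-span of the seven elements $$A=\left(\begin{array}{cc}\mathbb F_q^*&0\\0&\mathbb F_q^*\end{array}\right),\ B=\left(\begin{array}{cc}0&\mathbb F_q^*\\\mathbb F_q^*&0\end{array}\right),\ C=\left(\begin{array}{cc}\mathbb F_q^*&\mathbb F_q^*\\\mathbb F_q^*&\mathbb F_q^*\end{array}\right),$$ $$D_+=\left(\begin{array}{cc}\mathbb F_q^*&\mathbb F_q^*\\0&\mathbb F_q^*\end{array}\right),\ D_-=\left(\begin{array}{cc}\mathbb F_q^*&0\\\mathbb F_q^*&\mathbb F_q^*\end{array}\right),\ E_+=\left(\begin{array}{cc}\mathbb F_q^*&\mathbb F_q^*\\\mathbb F_q^*&0\end{array}\right),\ E_-=\left(\begin{array}{cc}0&\mathbb F_q^*\\\mathbb F_q^*&\mathbb F_q^*\end{array}\right),$$ which is a subring of $\mathbb Z[\mathrm{SL}_2(\mathbb F_q)]$. Then the $\mathbb Q$-algebra $\mathcal{SC}_{\mathbb Q}=\mathcal{SC}\otimes_{\mathbb Z}\mathbb Q$ is semi-simple and isomorphic to $\mathbb Q\oplus\mathbb Q\oplus\mathbb Q\oplus M_2(\mathbb Q)$, where $M_2(\mathbb Q)$ denotes the algebra of $2\times 2$ rational matrices.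
   Context: For subsets $\mathcal A,\mathcal B,\mathcal C,\mathcal D$ of $\mathbb F_q$, the symbol $\left(\begin{array}{cc}\mathcal A&\mathcal B\\\mathcal C&\mathcal D\end{array}\right)$ denotes the element $\sum \left(\begin{array}{cc}a&b\\c&d\end{array}\right)$ of $\mathbb Z[\mathrm{SL}_2(\mathbb F_q)]$, where the sum runs over all $(a,b,c,d)\in\mathcal A\times\mathcal B\times\mathcal C\times\mathcal D$ with $ad-bc=1$; an entry $0$ stands for the singleton $\{0\}$. So these are the sums of all matrices in $\mathrm{SL}_2(\mathbb F_q)$ with a given support. $\mathcal{SC}_{\mathbb Q}$ is a 7-dimensional $\mathbb Q$-algebra (with identity $\frac{1}{q-1}A$). *)

theory Defs
  imports "HOL-Analysis.Determinants"
begin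

text \<open>Elements of SL2(F) for a finite field F are matrices of type 'a^2^2 with det = 1.
  Elements of the group algebra Q[SL2(F)] are functions 'a^2^2 => rat vanishing off SL2(F).\<close>

definition SL2 :: "(('a::{field,finite})^2^2) set" where
  "SL2 = {M. det M = 1}"

definition supp_sum :: "'a set \<Rightarrow> 'a set \<Rightarrow> 'a set \<Rightarrow> 'a set \<Rightarrow> ('a::{field,finite})^2^2 \<Rightarrow> rat" where
  "supp_sum P Q R S = (\<lambda>M. if det M = 1 \<and> M$1$1 \<in> P \<and> M$1$2 \<in> Q \<and> M$2$1 \<in> R \<and> M$2$2 \<in> S
                             then 1 else 0)"

definition Fstar :: "('a::{field,finite}) set" where
  "Fstar = UNIV - {0}"

definition SC_A :: "('a::{field,finite})^2^2 \<Rightarrow> rat" where "SC_A = supp_sum Fstar {0} {0} Fstar"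
definition SC_B :: "('a::{field,finite})^2^2 \<Rightarrow> rat" where "SC_B = supp_sum {0} Fstar Fstar {0}"
definition SC_C :: "('a::{field,finite})^2^2 \<Rightarrow> rat" where "SC_C = supp_sum Fstar Fstar Fstar Fstar"
definition SC_Dp :: "('a::{field,finite})^2^2 \<Rightarrow> rat" where "SC_Dp = supp_sum Fstar Fstar {0} Fstar"
definition SC_Dm :: "('a::{field,finite})^2^2 \<Rightarrow> rat" where "SC_Dm = supp_sum Fstar {0} Fstar Fstar"
definition SC_Ep :: "('a::{field,finite})^2^2 \<Rightarrow> rat" where "SC_Ep = supp_sum Fstar Fstar Fstar {0}"
definition SC_Em :: "('a::{field,finite})^2^2 \<Rightarrow> rat" where "SC_Em = supp_sum {0} Fstar Fstar Fstar"

definition gconv :: "(('a::{field,finite})^2^2 \<Rightarrow> rat) \<Rightarrow> ('a^2^2 \<Rightarrow> rat) \<Rightarrow> 'a^2^2 \<Rightarrow> rat" where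
  "gconv f g = (\<lambda>M. \<Sum>X\<in>SL2. \<Sum>Y\<in>SL2. if X ** Y = M then f X * g Y else 0)"

text \<open>SC_Q: the Q-span of the seven elements inside Q[SL2(F)] (= SC tensor Q).\<close>
definition SC_Q :: "(('a::{field,finite})^2^2 \<Rightarrow> rat) set" where
  "SC_Q = {(\<lambda>M. c1 * SC_A M + c2 * SC_B M + c3 * SC_C M + c4 * SC_Dp M + c5 * SC_Dm M
                 + c6 * SC_Ep M + c7 * SC_Em M) | c1 c2 c3 c4 c5 c6 c7. True}"

type_synonym target = "rat \<times> rat \<times> rat \<times> ((rat^2)^2)"

definition tmult :: "target \<Rightarrow> target \<Rightarrow> target" where
  "tmult x y = (case x of (a1, a2, a3, m) \<Rightarrow> case y of (b1, b2, b3, n) \<Rightarrow>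
                  (a1 * b1, a2 * b2, a3 * b3, m ** n))"

definition tone :: target where
  "tone = (1, 1, 1, mat 1)"

definition tscale :: "rat \<Rightarrow> target \<Rightarrow> target" where
  "tscale c x = (case x of (a1, a2, a3, m) \<Rightarrow> (c * a1, c * a2, c * a3, (\<chi> i j. c * m$i$j)))"

end

theory Submission
  imports Defs
begin

text \<open>
  Left multiplication by an element of the support of \<open>A\<close>, \<open>B\<close> or \<open>D\<^sub>+\<close>
  rescales the rows, swaps them, or rescales them and adds a multiple of the second row to the
  first; counting the multiples that make an entry vanish yields the left multiplication tables
  of \<open>A\<close>, \<open>B\<close> and \<open>D\<^sub>+\<close> on the basis.  These tables show that \<open>SC_Q\<close> is closed under convolution
  and generated by \<open>A\<close>, \<open>B\<close>, \<open>D\<^sub>+\<close> (e.g. \<open>D\<^sub>+ B = (q-1) E\<^sub>+\<close>).  An explicit linear map to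
  \<open>\<rat> \<oplus> \<rat> \<oplus> \<rat> \<oplus> M\<^sub>2(\<rat>)\<close> is multiplicative on the generators, hence everywhere, and
  bijective since its inverse can be written down with denominator \<open>2q(q-1)\<^sup>2(q+1) \<noteq> 0\<close>.
\<close>

section \<open>Two-by-two matrices\<close>

definition mat2 :: "'a::field \<Rightarrow> 'a \<Rightarrow> 'a \<Rightarrow> 'a \<Rightarrow> 'a^2^2" where
  "mat2 a b c d = (\<chi> i j. if i = 1 then (if j = 1 then a else b) else (if j = 1 then c else d))"

lemma mat2_nth [simp]:
  "mat2 a b c d $1$1 = a" "mat2 a b c d $1$2 = b" "mat2 a b c d $2$1 = c" "mat2 a b c d $2$2 = d"
  by (simp_all add: mat2_def)

lemma vec2_2_eq_iff: "(X::'b^2^2) = Y \<longleftrightarrow> X$1$1 = Y$1$1 \<and> X$1$2 = Y$1$2 \<and> X$2$1 = Y$2$1 \<and> X$2$2 = Y$2$2"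
  by (auto simp: vec_eq_iff forall_2)

lemma mat2_eta: "mat2 (X$1$1) (X$1$2) (X$2$1) (X$2$2) = (X::'a::field^2^2)"
  by (simp add: vec2_2_eq_iff)

lemma matrix_matrix_mult_2_nth [simp]: "((X::'a::field^2^2) ** Y)$i$j = X$i$1 * Y$1$j + X$i$2 * Y$2$j"
  by (simp add: matrix_matrix_mult_def sum_2)

lemma det_mat2 [simp]: "det (mat2 a b c d) = a * d - b * (c::'a::field)"
  by (simp add: det_2)

definition adjugate2 :: "'a::field^2^2 \<Rightarrow> 'a^2^2" where
  "adjugate2 X = mat2 (X$2$2) (-X$1$2) (-X$2$1) (X$1$1)"

lemma adjugate2_mult_left: "det X = 1 \<Longrightarrow> adjugate2 X ** (X::'a::field^2^2) = mat 1"
  by (simp add: vec2_2_eq_iff adjugate2_def det_2 mat_def algebra_simps)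

lemma adjugate2_mult_right: "det X = 1 \<Longrightarrow> (X::'a::field^2^2) ** adjugate2 X = mat 1"
  by (simp add: vec2_2_eq_iff adjugate2_def det_2 mat_def algebra_simps)

lemma adjugate2_mult: "adjugate2 ((X::'a::field^2^2) ** Y) = adjugate2 Y ** adjugate2 X"
  by (simp add: vec2_2_eq_iff adjugate2_def algebra_simps)

lemma det_adjugate2 [simp]: "det (adjugate2 (X::'a::field^2^2)) = det X"
  by (simp add: adjugate2_def det_2 algebra_simps)

section \<open>Convolution in \<open>\<rat>[SL\<^sub>2(F)]\<close>\<close>

lemma SL2_iff [simp]: "X \<in> SL2 \<longleftrightarrow> det X = 1"
  by (simp add: SL2_def)

lemma SL2_mult_eq_iff:
  assumes "det X = 1"
  shows "X ** Y = M \<longleftrightarrow> Y = adjugate2 X ** (M::'a::field^2^2)"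
proof
  assume "X ** Y = M"
  then have "adjugate2 X ** (X ** Y) = adjugate2 X ** M" by simp
  then show "Y = adjugate2 X ** M" by (simp add: matrix_mul_assoc adjugate2_mult_left[OF assms])
next
  assume "Y = adjugate2 X ** M"
  then show "X ** Y = M" by (simp add: matrix_mul_assoc adjugate2_mult_right[OF assms])
qed

lemma bij_betw_mult_left_SL2:
  assumes "det (X::'a::{field,finite}^2^2) = 1"
  shows "bij_betw ((**) X) SL2 SL2"
proof (rule bij_betwI[where g = "(**) (adjugate2 X)"])
  show "(**) X \<in> SL2 \<rightarrow> SL2" "(**) (adjugate2 X) \<in> SL2 \<rightarrow> SL2"
    using assms by (auto simp: det_mul)
  show "adjugate2 X ** (X ** Y) = Y" "X ** (adjugate2 X ** Z) = Z" for Y Z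
    by (simp_all add: matrix_mul_assoc adjugate2_mult_left[OF assms] adjugate2_mult_right[OF assms])
qed

lemma gconv_eq:
  "gconv f g M = (if det M = 1 then \<Sum>X\<in>SL2. f X * g (adjugate2 X ** M) else 0)"
proof -
  have inner: "(\<Sum>Y\<in>SL2. if X ** Y = M then f X * g Y else 0) =
      (if det M = 1 then f X * g (adjugate2 X ** M) else 0)" if "det X = 1" for X
  proof -
    have "(\<Sum>Y\<in>SL2. if X ** Y = M then f X * g Y else 0) =
        (\<Sum>Y\<in>SL2. if Y = adjugate2 X ** M then f X * g (adjugate2 X ** M) else 0)"
      by (rule sum.cong) (auto simp: SL2_mult_eq_iff[OF that])
    also have "\<dots> = (if adjugate2 X ** M \<in> SL2 then f X * g (adjugate2 X ** M) else 0)"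
      by (simp add: sum.delta')
    finally show ?thesis using that by (simp add: det_mul)
  qed
  have "gconv f g M = (\<Sum>X\<in>SL2. if det M = 1 then f X * g (adjugate2 X ** M) else 0)"
    unfolding gconv_def by (intro sum.cong refl inner) simp
  then show ?thesis by simp
qed

lemma gconv_assoc: "gconv f (gconv g h) = gconv (gconv f g) (h :: ('a::{field,finite})^2^2 \<Rightarrow> rat)"
proof (rule ext)
  fix M :: "'a^2^2"
  show "gconv f (gconv g h) M = gconv (gconv f g) h M"
  proof (cases "det M = 1")
    case False then show ?thesis by (simp add: gconv_eq)
  next
    case True
    have reindex: "(\<Sum>Z\<in>SL2. g (adjugate2 X ** Z) * h (adjugate2 Z ** M)) =
        (\<Sum>Y\<in>SL2. g Y * h (adjugate2 Y ** (adjugate2 X ** M)))" if "det X = 1" for X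
      using sum.reindex_bij_betw[OF bij_betw_mult_left_SL2[OF that],
          of "\<lambda>Z. g (adjugate2 X ** Z) * h (adjugate2 Z ** M)"]
      by (simp add: matrix_mul_assoc adjugate2_mult_left[OF that] adjugate2_mult)
    have "gconv (gconv f g) h M = (\<Sum>Z\<in>SL2. \<Sum>X\<in>SL2. f X * (g (adjugate2 X ** Z) * h (adjugate2 Z ** M)))"
      using True by (simp add: gconv_eq sum_distrib_right mult.assoc)
    also have "\<dots> = (\<Sum>X\<in>SL2. f X * (\<Sum>Z\<in>SL2. g (adjugate2 X ** Z) * h (adjugate2 Z ** M)))"
      by (subst sum.swap) (simp add: sum_distrib_left)
    also have "\<dots> = (\<Sum>X\<in>SL2. f X * (\<Sum>Y\<in>SL2. g Y * h (adjugate2 Y ** (adjugate2 X ** M))))"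
      by (intro sum.cong refl) (simp add: reindex)
    also have "\<dots> = gconv f (gconv g h) M"
      using True by (simp add: gconv_eq det_mul)
    finally show ?thesis ..
  qed
qed

lemma gconv_add_left: "gconv (\<lambda>M. f M + g M) h = (\<lambda>M. gconv f h M + gconv g h M)"
  by (rule ext) (simp add: gconv_eq sum.distrib algebra_simps)

lemma gconv_scale_left: "gconv (\<lambda>M. c * f M) h = (\<lambda>M. c * gconv f h M)"
  by (rule ext) (simp add: gconv_eq sum_distrib_left algebra_simps)

section \<open>Left multiplication by \<open>A\<close>, \<open>B\<close> and \<open>D\<^sub>+\<close>\<close>

lemma Fstar_iff [simp]: "x \<in> Fstar \<longleftrightarrow> x \<noteq> 0"
  by (simp add: Fstar_def)

lemma of_nat_card_Fstar: "of_nat (card (Fstar :: 'a::{field,finite} set)) = (of_nat CARD('a) - 1 :: rat)"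
proof -
  have "card (Fstar :: 'a set) = CARD('a) - 1"
    by (simp add: Fstar_def card_Diff_singleton)
  moreover have "CARD('a) \<ge> 1" by (simp add: Suc_leI)
  ultimately show ?thesis by (simp add: of_nat_diff)
qed

lemma sum_Fstar_const: "(\<Sum>t\<in>(Fstar :: 'a::{field,finite} set). c) = (of_nat CARD('a) - 1 :: rat) * c"
  by (simp add: of_nat_card_Fstar)

lemma sum_Fstar_mult_left:
  assumes "t \<noteq> (0::'a::{field,finite})"
  shows "(\<Sum>s\<in>Fstar. g (t * s)) = (\<Sum>r\<in>Fstar. (g r :: rat))"
proof -
  have "bij_betw ((*) t) Fstar Fstar"
    using assms by (intro bij_betwI[where g = "(*) (inverse t)"]) auto
  then show ?thesis by (rule sum.reindex_bij_betw)
qed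

lemma sum_SL2_filter_param:
  assumes "finite S" "inj_on g S" "{X \<in> (SL2 :: (('a::{field,finite})^2^2) set). P X} = g ` S"
  shows "(\<Sum>X\<in>SL2. if P X then h X else 0) = (\<Sum>s\<in>S. h (g s))"
proof -
  have "(\<Sum>X\<in>SL2. if P X then h X else 0) = (\<Sum>X\<in>{X \<in> (SL2 :: ('a^2^2) set). P X}. h X)"
    by (rule sum.inter_filter[symmetric]) simp
  also have "\<dots> = (\<Sum>s\<in>S. h (g s))"
    unfolding assms(3) using sum.reindex[OF assms(2)] by simp
  finally show ?thesis .
qed

lemma sum_SL2_SC_A:
  "(\<Sum>X\<in>SL2. SC_A X * h X) = (\<Sum>t\<in>Fstar. h (mat2 t 0 0 (inverse t) :: ('a::{field,finite})^2^2))"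
proof -
  have "(\<Sum>X\<in>SL2. SC_A X * h X) =
      (\<Sum>X\<in>SL2. if det X = 1 \<and> X$1$1 \<noteq> 0 \<and> X$1$2 = 0 \<and> X$2$1 = 0 \<and> X$2$2 \<noteq> 0 then h X else 0)"
    by (intro sum.cong refl) (simp add: SC_A_def supp_sum_def)
  also have "\<dots> = (\<Sum>t\<in>Fstar. h (mat2 t 0 0 (inverse t)))"
  proof (rule sum_SL2_filter_param)
    show "inj_on (\<lambda>t. mat2 t 0 0 (inverse t) :: 'a^2^2) Fstar"
      by (rule inj_onI) (simp add: vec2_2_eq_iff)
    have param: "X \<in> (\<lambda>t. mat2 t 0 0 (inverse t)) ` Fstar"
      if "X$1$1 * X$2$2 = 1" "X$1$1 \<noteq> 0" "X$1$2 = 0" "X$2$1 = 0" for X :: "'a^2^2"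
      using that by (intro rev_image_eqI[of "X$1$1"]) (auto simp: vec2_2_eq_iff field_simps)
    show "{X \<in> SL2. det X = 1 \<and> X$1$1 \<noteq> 0 \<and> X$1$2 = 0 \<and> X$2$1 = 0 \<and> X$2$2 \<noteq> 0} =
        (\<lambda>t. mat2 t 0 0 (inverse t)) ` (Fstar :: 'a set)"
      by (auto simp: det_2 intro: param)
  qed simp
  finally show ?thesis .
qed

lemma sum_SL2_SC_B:
  "(\<Sum>X\<in>SL2. SC_B X * h X) = (\<Sum>t\<in>Fstar. h (mat2 0 t (- inverse t) 0 :: ('a::{field,finite})^2^2))"
proof -
  have "(\<Sum>X\<in>SL2. SC_B X * h X) =
      (\<Sum>X\<in>SL2. if det X = 1 \<and> X$1$1 = 0 \<and> X$1$2 \<noteq> 0 \<and> X$2$1 \<noteq> 0 \<and> X$2$2 = 0 then h X else 0)"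
    by (intro sum.cong refl) (simp add: SC_B_def supp_sum_def)
  also have "\<dots> = (\<Sum>t\<in>Fstar. h (mat2 0 t (- inverse t) 0))"
  proof (rule sum_SL2_filter_param)
    show "inj_on (\<lambda>t. mat2 0 t (- inverse t) 0 :: 'a^2^2) Fstar"
      by (rule inj_onI) (simp add: vec2_2_eq_iff)
    have param: "X \<in> (\<lambda>t. mat2 0 t (- inverse t) 0) ` Fstar"
      if "X$1$2 * X$2$1 = -1" "X$1$2 \<noteq> 0" "X$1$1 = 0" "X$2$2 = 0" for X :: "'a^2^2"
      using that by (intro rev_image_eqI[of "X$1$2"]) (auto simp: vec2_2_eq_iff field_simps)
    show "{X \<in> SL2. det X = 1 \<and> X$1$1 = 0 \<and> X$1$2 \<noteq> 0 \<and> X$2$1 \<noteq> 0 \<and> X$2$2 = 0} =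
        (\<lambda>t. mat2 0 t (- inverse t) 0) ` (Fstar :: 'a set)"
      by (auto simp: det_2 minus_equation_iff intro: param)
  qed simp
  finally show ?thesis .
qed

lemma sum_SL2_SC_Dp:
  "(\<Sum>X\<in>SL2. SC_Dp X * h X) =
     (\<Sum>t\<in>Fstar. \<Sum>s\<in>Fstar. h (mat2 t s 0 (inverse t) :: ('a::{field,finite})^2^2))"
proof -
  have "(\<Sum>X\<in>SL2. SC_Dp X * h X) =
      (\<Sum>X\<in>SL2. if det X = 1 \<and> X$1$1 \<noteq> 0 \<and> X$1$2 \<noteq> 0 \<and> X$2$1 = 0 \<and> X$2$2 \<noteq> 0 then h X else 0)"
    by (intro sum.cong refl) (simp add: SC_Dp_def supp_sum_def)
  also have "\<dots> = (\<Sum>p\<in>Fstar \<times> Fstar. h ((\<lambda>(t, s). mat2 t s 0 (inverse t)) p))"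
  proof (rule sum_SL2_filter_param)
    show "inj_on (\<lambda>(t, s). mat2 t s 0 (inverse t) :: 'a^2^2) (Fstar \<times> Fstar)"
      by (rule inj_onI) (auto simp: vec2_2_eq_iff)
    have param: "X \<in> (\<lambda>(t, s). mat2 t s 0 (inverse t)) ` (Fstar \<times> Fstar)"
      if "X$1$1 * X$2$2 = 1" "X$1$1 \<noteq> 0" "X$1$2 \<noteq> 0" "X$2$1 = 0" for X :: "'a^2^2"
      using that by (intro rev_image_eqI[of "(X$1$1, X$1$2)"]) (auto simp: vec2_2_eq_iff field_simps)
    show "{X \<in> SL2. det X = 1 \<and> X$1$1 \<noteq> 0 \<and> X$1$2 \<noteq> 0 \<and> X$2$1 = 0 \<and> X$2$2 \<noteq> 0} =
        (\<lambda>(t, s). mat2 t s 0 (inverse t)) ` (Fstar \<times> Fstar :: ('a \<times> 'a) set)"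
      by (auto simp: det_2 intro: param)
  qed simp
  also have "\<dots> = (\<Sum>t\<in>Fstar. \<Sum>s\<in>Fstar. h (mat2 t s 0 (inverse t)))"
    by (simp add: sum.cartesian_product split_def)
  finally show ?thesis .
qed

definition zero_or_units :: "'a::{field,finite} set \<Rightarrow> bool" where
  "zero_or_units P \<longleftrightarrow> P = {0} \<or> P = Fstar"

lemma zero_or_units_simps [simp]: "zero_or_units {0}" "zero_or_units Fstar"
  by (simp_all add: zero_or_units_def)

lemma zero_or_units_mult_iff: "c \<noteq> 0 \<Longrightarrow> zero_or_units P \<Longrightarrow> c * x \<in> P \<longleftrightarrow> x \<in> P"
  by (auto simp: zero_or_units_def)

lemma zero_or_units_uminus_iff: "zero_or_units P \<Longrightarrow> - x \<in> P \<longleftrightarrow> x \<in> P"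
  by (auto simp: zero_or_units_def)

lemma supp_sum_scale_rows:
  assumes "t * u = 1" "zero_or_units P" "zero_or_units Q" "zero_or_units R" "zero_or_units S"
  shows "supp_sum P Q R S (mat2 (t * a) (t * b) (u * c) (u * d)) = supp_sum P Q R S (mat2 a b c (d::'a::{field,finite}))"
proof -
  have "det (mat2 (t * a) (t * b) (u * c) (u * d)) = det (mat2 a b c d)"
    using assms(1) by (simp add: algebra_simps)
  moreover have "t \<noteq> 0" "u \<noteq> 0" using assms(1) by auto
  ultimately show ?thesis using assms(2-) by (simp add: supp_sum_def zero_or_units_mult_iff)
qed

lemma gconv_SC_A_supp_sum:
  assumes "zero_or_units P" "zero_or_units Q" "zero_or_units R" "zero_or_units S"
  shows "gconv SC_A (supp_sum P Q R S) = (\<lambda>M. (of_nat CARD('a) - 1) * supp_sum P Q R S (M::('a::{field,finite})^2^2))"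
proof (rule ext)
  fix M :: "'a^2^2"
  show "gconv SC_A (supp_sum P Q R S) M = (of_nat CARD('a) - 1) * supp_sum P Q R S M"
  proof (cases "det M = 1")
    case False then show ?thesis by (simp add: gconv_eq supp_sum_def)
  next
    case True
    have "gconv SC_A (supp_sum P Q R S) M = (\<Sum>t\<in>Fstar. supp_sum P Q R S (adjugate2 (mat2 t 0 0 (inverse t)) ** M))"
      using True by (simp add: gconv_eq sum_SL2_SC_A)
    also have "\<dots> = (\<Sum>t\<in>(Fstar::'a set). supp_sum P Q R S M)"
    proof (rule sum.cong[OF refl])
      fix t :: 'a assume "t \<in> Fstar"
      then have "inverse t * t = 1" by simp
      moreover have "adjugate2 (mat2 t 0 0 (inverse t)) ** M =
          mat2 (inverse t * M$1$1) (inverse t * M$1$2) (t * M$2$1) (t * M$2$2)"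
        by (simp add: vec2_2_eq_iff adjugate2_def)
      ultimately show "supp_sum P Q R S (adjugate2 (mat2 t 0 0 (inverse t)) ** M) = supp_sum P Q R S M"
        using assms by (simp add: supp_sum_scale_rows mat2_eta)
    qed
    also have "\<dots> = (of_nat CARD('a) - 1) * supp_sum P Q R S M" by (rule sum_Fstar_const)
    finally show ?thesis .
  qed
qed

lemma gconv_SC_B_supp_sum:
  assumes "zero_or_units P" "zero_or_units Q" "zero_or_units R" "zero_or_units S"
  shows "gconv SC_B (supp_sum P Q R S) = (\<lambda>M. (of_nat CARD('a) - 1) * supp_sum R S P Q (M::('a::{field,finite})^2^2))"
proof (rule ext)
  fix M :: "'a^2^2"
  show "gconv SC_B (supp_sum P Q R S) M = (of_nat CARD('a) - 1) * supp_sum R S P Q M"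
  proof (cases "det M = 1")
    case False then show ?thesis by (simp add: gconv_eq supp_sum_def)
  next
    case True
    have "gconv SC_B (supp_sum P Q R S) M = (\<Sum>t\<in>Fstar. supp_sum P Q R S (adjugate2 (mat2 0 t (- inverse t) 0) ** M))"
      using True by (simp add: gconv_eq sum_SL2_SC_B)
    also have "\<dots> = (\<Sum>t\<in>(Fstar::'a set). supp_sum R S P Q M)"
    proof (rule sum.cong[OF refl])
      fix t :: 'a assume "t \<in> Fstar"
      then have t: "t \<noteq> 0" by simp
      let ?N = "mat2 ((-t) * M$2$1) ((-t) * M$2$2) (inverse t * M$1$1) (inverse t * M$1$2)"
      have "adjugate2 (mat2 0 t (- inverse t) 0) ** M = ?N"
        by (simp add: vec2_2_eq_iff adjugate2_def)
      moreover have "det ?N = det M"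
        using t by (simp add: det_2 field_simps)
      ultimately show "supp_sum P Q R S (adjugate2 (mat2 0 t (- inverse t) 0) ** M) = supp_sum R S P Q M"
        using t assms by (simp add: supp_sum_def zero_or_units_mult_iff zero_or_units_uminus_iff conj_ac)
    qed
    also have "\<dots> = (of_nat CARD('a) - 1) * supp_sum R S P Q M" by (rule sum_Fstar_const)
    finally show ?thesis .
  qed
qed

lemma gconv_SC_Dp_supp_sum:
  fixes M :: "('a::{field,finite})^2^2"
  assumes "zero_or_units P" "zero_or_units Q" "zero_or_units R" "zero_or_units S" "det M = 1"
  shows "gconv SC_Dp (supp_sum P Q R S) M = (of_nat CARD('a) - 1) *
     (\<Sum>r\<in>Fstar. supp_sum P Q R S (mat2 (M$1$1 - r * M$2$1) (M$1$2 - r * M$2$2) (M$2$1) (M$2$2)))"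
proof -
  let ?g = "\<lambda>r. supp_sum P Q R S (mat2 (M$1$1 - r * M$2$1) (M$1$2 - r * M$2$2) (M$2$1) (M$2$2))"
  have "gconv SC_Dp (supp_sum P Q R S) M =
      (\<Sum>t\<in>Fstar. \<Sum>s\<in>Fstar. supp_sum P Q R S (adjugate2 (mat2 t s 0 (inverse t)) ** M))"
    using assms(5) by (simp add: gconv_eq sum_SL2_SC_Dp)
  also have "\<dots> = (\<Sum>t\<in>(Fstar::'a set). \<Sum>s\<in>Fstar. ?g (t * s))"
  proof (intro sum.cong refl)
    fix t s :: 'a assume "t \<in> Fstar"
    then have t: "t \<noteq> 0" by simp
    have "adjugate2 (mat2 t s 0 (inverse t)) ** M =
        mat2 (inverse t * (M$1$1 - (t * s) * M$2$1)) (inverse t * (M$1$2 - (t * s) * M$2$2)) (t * M$2$1) (t * M$2$2)"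
      using t by (simp add: vec2_2_eq_iff adjugate2_def field_simps)
    then show "supp_sum P Q R S (adjugate2 (mat2 t s 0 (inverse t)) ** M) = ?g (t * s)"
      using t assms by (simp add: supp_sum_scale_rows)
  qed
  also have "\<dots> = (\<Sum>t\<in>(Fstar::'a set). \<Sum>r\<in>Fstar. ?g r)"
    by (intro sum.cong refl sum_Fstar_mult_left) simp
  also have "\<dots> = (of_nat CARD('a) - 1) * (\<Sum>r\<in>Fstar. ?g r)" by (rule sum_Fstar_const)
  finally show ?thesis .
qed

definition both_nonzero :: "'a::zero \<Rightarrow> 'a \<Rightarrow> rat" where
  "both_nonzero a c = (if a \<noteq> 0 \<and> c \<noteq> 0 then 1 else 0)"

lemma sum_Fstar_root_indicator:
  assumes "a \<noteq> 0 \<or> c \<noteq> (0::'a::{field,finite})"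
  shows "(\<Sum>r\<in>Fstar. if a = r * c then 1 else (0::rat)) = both_nonzero a c"
proof (cases "c = 0")
  case True
  then show ?thesis using assms by (simp add: both_nonzero_def)
next
  case False
  then have "(\<Sum>r\<in>Fstar. if a = r * c then 1 else (0::rat)) = (\<Sum>r\<in>Fstar. if r = a / c then 1 else 0)"
    by (intro sum.cong refl) (auto simp: field_simps)
  then show ?thesis using False by (simp add: sum.delta' both_nonzero_def)
qed

lemma det_row_reduction: "a * d - b * c = 1 \<Longrightarrow> det (mat2 (a - r * c) (b - r * d) c d) = (1::'a::field)"
  by (simp add: algebra_simps)

lemma row_reduction_not_both_zero:
  assumes "a * d - b * c = (1::'a::field)" "a - r * c = 0" "b - r * d = 0"
  shows False
proof -
  have "a = r * c" "b = r * d" using assms(2,3) by simp_all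
  then show False using assms(1) by (simp add: algebra_simps)
qed

lemma sum_row_reduction_zero_units:
  assumes "a * d - b * c = (1::'a::{field,finite})"
  shows "(\<Sum>r\<in>Fstar. supp_sum {0} Fstar R S (mat2 (a - r * c) (b - r * d) c d)) =
    (if c \<in> R \<and> d \<in> S then both_nonzero a c else 0)"
proof -
  have "supp_sum {0} Fstar R S (mat2 (a - r * c) (b - r * d) c d) =
      (if c \<in> R \<and> d \<in> S then (if a = r * c then 1 else 0) else 0)" for r
    unfolding supp_sum_def det_row_reduction[OF assms] using row_reduction_not_both_zero[OF assms, of r] by auto
  moreover have "a \<noteq> 0 \<or> c \<noteq> 0" using assms by auto
  ultimately show ?thesis by (cases "c \<in> R \<and> d \<in> S") (auto simp: sum_Fstar_root_indicator)
qed

lemma sum_row_reduction_units_zero: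
  assumes "a * d - b * c = (1::'a::{field,finite})"
  shows "(\<Sum>r\<in>Fstar. supp_sum Fstar {0} R S (mat2 (a - r * c) (b - r * d) c d)) =
    (if c \<in> R \<and> d \<in> S then both_nonzero b d else 0)"
proof -
  have "supp_sum Fstar {0} R S (mat2 (a - r * c) (b - r * d) c d) =
      (if c \<in> R \<and> d \<in> S then (if b = r * d then 1 else 0) else 0)" for r
    unfolding supp_sum_def det_row_reduction[OF assms] using row_reduction_not_both_zero[OF assms, of r] by auto
  moreover have "b \<noteq> 0 \<or> d \<noteq> 0" using assms by auto
  ultimately show ?thesis by (cases "c \<in> R \<and> d \<in> S") (auto simp: sum_Fstar_root_indicator)
qed

lemma sum_row_reduction_units_units:
  assumes "a * d - b * c = (1::'a::{field,finite})"
  shows "(\<Sum>r\<in>Fstar. supp_sum Fstar Fstar R S (mat2 (a - r * c) (b - r * d) c d)) =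
    (if c \<in> R \<and> d \<in> S then (of_nat CARD('a) - 1) - both_nonzero a c - both_nonzero b d else 0)"
proof -
  have "supp_sum Fstar Fstar R S (mat2 (a - r * c) (b - r * d) c d) =
      (if c \<in> R \<and> d \<in> S then 1 - (if a = r * c then 1 else 0) - (if b = r * d then 1 else 0) else 0)" for r
    unfolding supp_sum_def det_row_reduction[OF assms] using row_reduction_not_both_zero[OF assms, of r] by auto
  moreover have "a \<noteq> 0 \<or> c \<noteq> 0" "b \<noteq> 0 \<or> d \<noteq> 0" using assms by auto
  ultimately show ?thesis
    by (cases "c \<in> R \<and> d \<in> S") (auto simp: sum_subtractf of_nat_card_Fstar sum_Fstar_root_indicator)
qed

section \<open>The span \<open>SC_Q\<close> and its multiplication table\<close>

definition sc_comb ::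
    "rat \<Rightarrow> rat \<Rightarrow> rat \<Rightarrow> rat \<Rightarrow> rat \<Rightarrow> rat \<Rightarrow> rat \<Rightarrow> ('a::{field,finite})^2^2 \<Rightarrow> rat" where
  "sc_comb c1 c2 c3 c4 c5 c6 c7 = (\<lambda>M. c1 * SC_A M + c2 * SC_B M + c3 * SC_C M + c4 * SC_Dp M
     + c5 * SC_Dm M + c6 * SC_Ep M + c7 * SC_Em M)"

lemmas SC_defs = SC_A_def SC_B_def SC_C_def SC_Dp_def SC_Dm_def SC_Ep_def SC_Em_def

lemma sc_comb_in_SC_Q: "sc_comb c1 c2 c3 c4 c5 c6 c7 \<in> SC_Q"
  unfolding SC_Q_def sc_comb_def by blast

lemma SC_QE:
  assumes "f \<in> SC_Q"
  obtains c1 c2 c3 c4 c5 c6 c7 where "f = sc_comb c1 c2 c3 c4 c5 c6 c7"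
  using assms unfolding SC_Q_def sc_comb_def by blast

lemma SC_Q_add: "f \<in> SC_Q \<Longrightarrow> g \<in> SC_Q \<Longrightarrow> (\<lambda>M. f M + g M) \<in> SC_Q"
proof (elim SC_QE)
  fix c1 c2 c3 c4 c5 c6 c7 d1 d2 d3 d4 d5 d6 d7
  assume "f = sc_comb c1 c2 c3 c4 c5 c6 c7" "g = sc_comb d1 d2 d3 d4 d5 d6 d7"
  then have "(\<lambda>M. f M + g M) = sc_comb (c1 + d1) (c2 + d2) (c3 + d3) (c4 + d4) (c5 + d5) (c6 + d6) (c7 + d7)"
    by (simp add: sc_comb_def algebra_simps)
  then show ?thesis by (simp add: sc_comb_in_SC_Q)
qed

lemma SC_Q_scale: "f \<in> SC_Q \<Longrightarrow> (\<lambda>M. s * f M) \<in> SC_Q"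
proof (elim SC_QE)
  fix c1 c2 c3 c4 c5 c6 c7
  assume "f = sc_comb c1 c2 c3 c4 c5 c6 c7"
  then have "(\<lambda>M. s * f M) = sc_comb (s * c1) (s * c2) (s * c3) (s * c4) (s * c5) (s * c6) (s * c7)"
    by (simp add: sc_comb_def algebra_simps)
  then show ?thesis by (simp add: sc_comb_in_SC_Q)
qed

lemma SC_basis_eq_sc_comb:
  "SC_A = sc_comb 1 0 0 0 0 0 0" "SC_B = sc_comb 0 1 0 0 0 0 0" "SC_C = sc_comb 0 0 1 0 0 0 0"
  "SC_Dp = sc_comb 0 0 0 1 0 0 0" "SC_Dm = sc_comb 0 0 0 0 1 0 0" "SC_Ep = sc_comb 0 0 0 0 0 1 0"
  "SC_Em = sc_comb 0 0 0 0 0 0 1"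
  by (simp_all add: sc_comb_def)

lemma SC_basis_in_SC_Q:
  "SC_A \<in> SC_Q" "SC_B \<in> SC_Q" "SC_C \<in> SC_Q" "SC_Dp \<in> SC_Q" "SC_Dm \<in> SC_Q" "SC_Ep \<in> SC_Q" "SC_Em \<in> SC_Q"
  by (simp_all only: SC_basis_eq_sc_comb sc_comb_in_SC_Q)

lemma gconv_SC_Dp_eq_sc_combI:
  fixes P Q R S :: "'a::{field,finite} set"
  assumes "zero_or_units P" "zero_or_units Q" "zero_or_units R" "zero_or_units S"
    and "\<And>a b c d. a * d - b * c = 1 \<Longrightarrow>
      (of_nat CARD('a) - 1) * (\<Sum>r\<in>Fstar. supp_sum P Q R S (mat2 (a - r * c) (b - r * d) c d)) =
      sc_comb c1 c2 c3 c4 c5 c6 c7 (mat2 a b c d)"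
  shows "gconv SC_Dp (supp_sum P Q R S) = sc_comb c1 c2 c3 c4 c5 c6 c7"
proof (rule ext)
  fix M :: "'a^2^2"
  show "gconv SC_Dp (supp_sum P Q R S) M = sc_comb c1 c2 c3 c4 c5 c6 c7 M"
  proof (cases "det M = 1")
    case False
    then show ?thesis by (simp add: gconv_eq sc_comb_def SC_defs supp_sum_def)
  next
    case True
    then show ?thesis
      using gconv_SC_Dp_supp_sum[OF assms(1-4) True] assms(5)[of "M$1$1" "M$2$2" "M$1$2" "M$2$1"]
      by (simp add: det_2 mat2_eta)
  qed
qed

lemma gconv_SC_Dp_SC_A:
  "gconv SC_Dp (SC_A :: ('a::{field,finite})^2^2 \<Rightarrow> rat) = sc_comb 0 0 0 (of_nat CARD('a) - 1) 0 0 0"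
  unfolding SC_A_def
  by (rule gconv_SC_Dp_eq_sc_combI; simp only: sum_row_reduction_units_zero zero_or_units_simps)
    (auto simp: sc_comb_def SC_defs supp_sum_def both_nonzero_def)

lemma gconv_SC_Dp_SC_B:
  "gconv SC_Dp (SC_B :: ('a::{field,finite})^2^2 \<Rightarrow> rat) =
    sc_comb 0 0 0 0 0 (of_nat CARD('a) - 1) 0"
  unfolding SC_B_def
  by (rule gconv_SC_Dp_eq_sc_combI; simp only: sum_row_reduction_zero_units zero_or_units_simps)
    (auto simp: sc_comb_def SC_defs supp_sum_def both_nonzero_def algebra_simps)

lemma gconv_SC_Dp_SC_C:
  "gconv SC_Dp (SC_C :: ('a::{field,finite})^2^2 \<Rightarrow> rat) =
    sc_comb 0 0 ((of_nat CARD('a) - 1) * (of_nat CARD('a) - 3)) 0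
      ((of_nat CARD('a) - 1) * (of_nat CARD('a) - 2)) 0 ((of_nat CARD('a) - 1) * (of_nat CARD('a) - 2))"
  unfolding SC_C_def
  by (rule gconv_SC_Dp_eq_sc_combI; simp only: sum_row_reduction_units_units zero_or_units_simps)
    (auto simp: sc_comb_def SC_defs supp_sum_def both_nonzero_def algebra_simps)

lemma gconv_SC_Dp_SC_Dp:
  "gconv SC_Dp (SC_Dp :: ('a::{field,finite})^2^2 \<Rightarrow> rat) =
    sc_comb ((of_nat CARD('a) - 1) * (of_nat CARD('a) - 1)) 0 0
      ((of_nat CARD('a) - 1) * (of_nat CARD('a) - 2)) 0 0 0"
  by (subst (2) SC_Dp_def, rule gconv_SC_Dp_eq_sc_combI;
      simp only: sum_row_reduction_units_units zero_or_units_simps)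
    (auto simp: sc_comb_def SC_defs supp_sum_def both_nonzero_def algebra_simps)

lemma gconv_SC_Dp_SC_Dm:
  "gconv SC_Dp (SC_Dm :: ('a::{field,finite})^2^2 \<Rightarrow> rat) =
    sc_comb 0 0 (of_nat CARD('a) - 1) 0 0 0 (of_nat CARD('a) - 1)"
  unfolding SC_Dm_def
  by (rule gconv_SC_Dp_eq_sc_combI; simp only: sum_row_reduction_units_zero zero_or_units_simps)
    (auto simp: sc_comb_def SC_defs supp_sum_def both_nonzero_def algebra_simps)

lemma gconv_SC_Dp_SC_Ep:
  "gconv SC_Dp (SC_Ep :: ('a::{field,finite})^2^2 \<Rightarrow> rat) =
    sc_comb 0 ((of_nat CARD('a) - 1) * (of_nat CARD('a) - 1)) 0 0 0
      ((of_nat CARD('a) - 1) * (of_nat CARD('a) - 2)) 0"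
  unfolding SC_Ep_def
  by (rule gconv_SC_Dp_eq_sc_combI; simp only: sum_row_reduction_units_units zero_or_units_simps)
    (auto simp: sc_comb_def SC_defs supp_sum_def both_nonzero_def algebra_simps)

lemma gconv_SC_Dp_SC_Em:
  "gconv SC_Dp (SC_Em :: ('a::{field,finite})^2^2 \<Rightarrow> rat) =
    sc_comb 0 0 (of_nat CARD('a) - 1) 0 (of_nat CARD('a) - 1) 0 0"
  unfolding SC_Em_def
  by (rule gconv_SC_Dp_eq_sc_combI; simp only: sum_row_reduction_zero_units zero_or_units_simps)
    (auto simp: sc_comb_def SC_defs supp_sum_def both_nonzero_def algebra_simps)

lemma gconv_sc_comb_right:
  "gconv f (sc_comb c1 c2 c3 c4 c5 c6 c7) = (\<lambda>M. c1 * gconv f SC_A M + c2 * gconv f SC_B M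
     + c3 * gconv f SC_C M + c4 * gconv f SC_Dp M + c5 * gconv f SC_Dm M + c6 * gconv f SC_Ep M
     + c7 * gconv f SC_Em M)"
  by (rule ext) (simp add: gconv_eq sc_comb_def sum.distrib sum_distrib_left algebra_simps)

lemma gconv_SC_A_sc_comb:
  "gconv SC_A (sc_comb c1 c2 c3 c4 c5 c6 c7 :: ('a::{field,finite})^2^2 \<Rightarrow> rat) =
    sc_comb ((of_nat CARD('a) - 1) * c1) ((of_nat CARD('a) - 1) * c2) ((of_nat CARD('a) - 1) * c3)
      ((of_nat CARD('a) - 1) * c4) ((of_nat CARD('a) - 1) * c5) ((of_nat CARD('a) - 1) * c6) ((of_nat CARD('a) - 1) * c7)"
proof -
  note basis = gconv_SC_A_supp_sum[of Fstar "{0}" "{0}" Fstar, simplified, folded SC_defs]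
    gconv_SC_A_supp_sum[of "{0}" Fstar Fstar "{0}", simplified, folded SC_defs]
    gconv_SC_A_supp_sum[of Fstar Fstar Fstar Fstar, simplified, folded SC_defs]
    gconv_SC_A_supp_sum[of Fstar Fstar "{0}" Fstar, simplified, folded SC_defs]
    gconv_SC_A_supp_sum[of Fstar "{0}" Fstar Fstar, simplified, folded SC_defs]
    gconv_SC_A_supp_sum[of Fstar Fstar Fstar "{0}", simplified, folded SC_defs]
    gconv_SC_A_supp_sum[of "{0}" Fstar Fstar Fstar, simplified, folded SC_defs]
  show ?thesis
    unfolding gconv_sc_comb_right basis by (rule ext) (simp add: sc_comb_def algebra_simps)
qed

lemma gconv_SC_B_sc_comb:
  "gconv SC_B (sc_comb c1 c2 c3 c4 c5 c6 c7 :: ('a::{field,finite})^2^2 \<Rightarrow> rat) =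
    sc_comb ((of_nat CARD('a) - 1) * c2) ((of_nat CARD('a) - 1) * c1) ((of_nat CARD('a) - 1) * c3)
      ((of_nat CARD('a) - 1) * c7) ((of_nat CARD('a) - 1) * c6) ((of_nat CARD('a) - 1) * c5) ((of_nat CARD('a) - 1) * c4)"
proof -
  note basis = gconv_SC_B_supp_sum[of Fstar "{0}" "{0}" Fstar, simplified, folded SC_defs]
    gconv_SC_B_supp_sum[of "{0}" Fstar Fstar "{0}", simplified, folded SC_defs]
    gconv_SC_B_supp_sum[of Fstar Fstar Fstar Fstar, simplified, folded SC_defs]
    gconv_SC_B_supp_sum[of Fstar Fstar "{0}" Fstar, simplified, folded SC_defs]
    gconv_SC_B_supp_sum[of Fstar "{0}" Fstar Fstar, simplified, folded SC_defs]
    gconv_SC_B_supp_sum[of Fstar Fstar Fstar "{0}", simplified, folded SC_defs]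
    gconv_SC_B_supp_sum[of "{0}" Fstar Fstar Fstar, simplified, folded SC_defs]
  show ?thesis
    unfolding gconv_sc_comb_right basis by (rule ext) (simp add: sc_comb_def algebra_simps)
qed

lemma gconv_SC_Dp_sc_comb:
  "gconv SC_Dp (sc_comb c1 c2 c3 c4 c5 c6 c7 :: ('a::{field,finite})^2^2 \<Rightarrow> rat) =
    (let q = of_nat CARD('a) :: rat in
     sc_comb ((q - 1) * (q - 1) * c4) ((q - 1) * (q - 1) * c6) ((q - 1) * (q - 3) * c3 + (q - 1) * c5 + (q - 1) * c7)
       ((q - 1) * c1 + (q - 1) * (q - 2) * c4) ((q - 1) * (q - 2) * c3 + (q - 1) * c7)
       ((q - 1) * c2 + (q - 1) * (q - 2) * c6) ((q - 1) * (q - 2) * c3 + (q - 1) * c5))"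
  unfolding gconv_sc_comb_right gconv_SC_Dp_SC_A gconv_SC_Dp_SC_B gconv_SC_Dp_SC_C gconv_SC_Dp_SC_Dp
    gconv_SC_Dp_SC_Dm gconv_SC_Dp_SC_Ep gconv_SC_Dp_SC_Em Let_def
  by (rule ext) (simp add: sc_comb_def algebra_simps)

section \<open>Coordinates in \<open>\<rat> \<oplus> \<rat> \<oplus> \<rat> \<oplus> M\<^sub>2(\<rat>)\<close>\<close>

text \<open>The image of \<open>c\<^sub>1 A + c\<^sub>2 B + c\<^sub>3 C + c\<^sub>4 D\<^sub>+ + c\<^sub>5 D\<^sub>- + c\<^sub>6 E\<^sub>+ + c\<^sub>7 E\<^sub>-\<close> under the three
  one-dimensional and the two-dimensional representation of \<open>SC_Q\<close>, for \<open>q = |F|\<close>.\<close>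

definition to_target :: "rat \<Rightarrow> rat \<Rightarrow> rat \<Rightarrow> rat \<Rightarrow> rat \<Rightarrow> rat \<Rightarrow> rat \<Rightarrow> rat \<Rightarrow> target" where
  "to_target q c1 c2 c3 c4 c5 c6 c7 = (let k = q - 1 in
     (k * (c1 + c2 + k * (q - 2) * c3 + k * (c4 + c5 + c6 + c7)),
      k * (c1 + c2 + 2 * c3 - c4 - c5 - c6 - c7),
      k * (c1 - c2 - c4 - c5 + c6 + c7),
      mat2 (k * (c1 + (2 - q) * c3 + k * c4 - c5 - c6)) (k * (c2 + (2 - q) * c3 - c4 + k * c6 - c7))
        (k * (c2 + (2 - q) * c3 - c5 - c6 + k * c7)) (k * (c1 + (2 - q) * c3 - c4 + k * c5 - c7))))"

lemma tmult_mat2: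
  "tmult (a1, a2, a3, mat2 w x y z) (b1, b2, b3, mat2 w' x' y' z') =
    (a1 * b1, a2 * b2, a3 * b3, mat2 (w * w' + x * y') (w * x' + x * z') (y * w' + z * y') (y * x' + z * z'))"
  by (simp add: tmult_def vec2_2_eq_iff)

lemma tmult_assoc: "tmult (tmult x y) z = tmult x (tmult y z)"
  by (cases x; cases y; cases z) (simp add: tmult_def matrix_mul_assoc)

lemma tmult_add_left: "tmult (x + y) z = tmult x z + tmult y z"
  by (cases x; cases y; cases z) (simp add: tmult_def plus_prod_def vec2_2_eq_iff algebra_simps)

lemma tmult_scale_left: "tmult (tscale s x) z = tscale s (tmult x z)"
  by (cases x; cases z) (simp add: tmult_def tscale_def vec2_2_eq_iff algebra_simps)

lemma tscale_tscale: "tscale a (tscale b t) = tscale (a * b) t"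
  by (cases t) (simp add: tscale_def vec2_2_eq_iff)

lemma tscale_one: "tscale 1 t = t"
  by (cases t) (simp add: tscale_def vec2_2_eq_iff)

lemma to_target_add:
  "to_target q (c1 + d1) (c2 + d2) (c3 + d3) (c4 + d4) (c5 + d5) (c6 + d6) (c7 + d7) =
    to_target q c1 c2 c3 c4 c5 c6 c7 + to_target q d1 d2 d3 d4 d5 d6 d7"
  unfolding to_target_def Let_def by (simp add: plus_prod_def vec2_2_eq_iff algebra_simps)

lemma to_target_scale:
  "to_target q (s * c1) (s * c2) (s * c3) (s * c4) (s * c5) (s * c6) (s * c7) =
    tscale s (to_target q c1 c2 c3 c4 c5 c6 c7)"
  unfolding to_target_def Let_def by (simp add: tscale_def vec2_2_eq_iff algebra_simps)

lemma to_target_mult_A: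
  "tmult (to_target q 1 0 0 0 0 0 0) (to_target q c1 c2 c3 c4 c5 c6 c7) =
    to_target q ((q - 1) * c1) ((q - 1) * c2) ((q - 1) * c3) ((q - 1) * c4) ((q - 1) * c5) ((q - 1) * c6) ((q - 1) * c7)"
  unfolding to_target_def Let_def tmult_mat2 by (simp add: algebra_simps)

lemma to_target_mult_B:
  "tmult (to_target q 0 1 0 0 0 0 0) (to_target q c1 c2 c3 c4 c5 c6 c7) =
    to_target q ((q - 1) * c2) ((q - 1) * c1) ((q - 1) * c3) ((q - 1) * c7) ((q - 1) * c6) ((q - 1) * c5) ((q - 1) * c4)"
  unfolding to_target_def Let_def tmult_mat2 by (simp add: algebra_simps)

lemma to_target_mult_Dp:
  "tmult (to_target q 0 0 0 1 0 0 0) (to_target q c1 c2 c3 c4 c5 c6 c7) =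
    to_target q ((q - 1) * (q - 1) * c4) ((q - 1) * (q - 1) * c6) ((q - 1) * (q - 3) * c3 + (q - 1) * c5 + (q - 1) * c7)
      ((q - 1) * c1 + (q - 1) * (q - 2) * c4) ((q - 1) * (q - 2) * c3 + (q - 1) * c7)
      ((q - 1) * c2 + (q - 1) * (q - 2) * c6) ((q - 1) * (q - 2) * c3 + (q - 1) * c5)"
  unfolding to_target_def Let_def tmult_mat2 by (simp add: algebra_simps)

definition from_target_num :: "rat \<Rightarrow> target \<Rightarrow> rat list" where
  "from_target_num q t = (case t of (s1, s2, s3, m) \<Rightarrow>
     (let a = m$1$1; b = m$1$2; c = m$2$1; d = m$2$2 in
        [2*(q-1) * s1 + (q-2)*(q-1)*(q+1) * s2 + q*(q-1)*(q-1) * s3 + 2*q*(q-1)*(a+d),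
         2*(q-1) * s1 + (q-2)*(q-1)*(q+1) * s2 - q*(q-1)*(q-1) * s3 + 2*q*(q-1)*(b+c),
         2*(q-1) * s1 + 2*(q+1) * s2 - 2*q*(a+b+c+d),
         2*(q-1) * s1 - (q-2)*(q+1) * s2 - q*(q-1) * s3 + 2*q*(q-1)*a - 2*q*(c+d),
         2*(q-1) * s1 - (q-2)*(q+1) * s2 - q*(q-1) * s3 - 2*q*(a+b) + 2*q*(q-1)*d,
         2*(q-1) * s1 - (q-2)*(q+1) * s2 + q*(q-1) * s3 + 2*q*(q-1)*b - 2*q*(c+d),
         2*(q-1) * s1 - (q-2)*(q+1) * s2 + q*(q-1) * s3 - 2*q*(a+b) + 2*q*(q-1)*c]))"

definition from_target_den :: "rat \<Rightarrow> rat" where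
  "from_target_den q = 2*q*(q-1)*(q-1)*(q+1)"

definition from_target :: "rat \<Rightarrow> target \<Rightarrow> rat list" where
  "from_target q t = map (\<lambda>x. x / from_target_den q) (from_target_num q t)"

lemma from_target_den_nonzero: "q > 2 \<Longrightarrow> from_target_den q \<noteq> 0"
  unfolding from_target_den_def by auto

lemma from_target_num_to_target:
  "from_target_num q (to_target q c1 c2 c3 c4 c5 c6 c7) = map (\<lambda>c. c * from_target_den q) [c1, c2, c3, c4, c5, c6, c7]"
  unfolding from_target_num_def to_target_def from_target_den_def Let_def by (simp add: algebra_simps)

lemma to_target_from_target_num:
  "to_target q (from_target_num q t ! 0) (from_target_num q t ! 1) (from_target_num q t ! 2) (from_target_num q t ! 3)
     (from_target_num q t ! 4) (from_target_num q t ! 5) (from_target_num q t ! 6) = tscale (from_target_den q) t"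
proof -
  obtain s1 s2 s3 m where t: "t = (s1, s2, s3, m)" by (cases t) auto
  show ?thesis unfolding t from_target_num_def to_target_def from_target_den_def Let_def tscale_def
    by (simp add: vec2_2_eq_iff algebra_simps)
qed

lemma from_target_to_target:
  "q > 2 \<Longrightarrow> from_target q (to_target q c1 c2 c3 c4 c5 c6 c7) = [c1, c2, c3, c4, c5, c6, c7]"
  unfolding from_target_def from_target_num_to_target by (simp add: from_target_den_nonzero)

lemma to_target_from_target:
  assumes "q > 2"
  shows "to_target q (from_target q t ! 0) (from_target q t ! 1) (from_target q t ! 2) (from_target q t ! 3)
    (from_target q t ! 4) (from_target q t ! 5) (from_target q t ! 6) = t"
proof -
  have "length (from_target_num q t) = 7" by (cases t) (simp add: from_target_num_def Let_def)
  then have "from_target q t ! i = (1 / from_target_den q) * from_target_num q t ! i" if "i < 7" for i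
    unfolding from_target_def using that by simp
  then have "to_target q (from_target q t ! 0) (from_target q t ! 1) (from_target q t ! 2) (from_target q t ! 3)
      (from_target q t ! 4) (from_target q t ! 5) (from_target q t ! 6) =
    tscale (1 / from_target_den q) (tscale (from_target_den q) t)"
    by (simp only: to_target_scale[symmetric] to_target_from_target_num[symmetric] numeral_less_iff) simp
  also have "\<dots> = t" using from_target_den_nonzero[OF assms] by (simp add: tscale_tscale tscale_one)
  finally show ?thesis .
qed

section \<open>The isomorphism\<close>

text \<open>The seven supports are disjoint, so an element of \<open>SC_Q\<close> is determined by its values at one
  matrix in each of them; \<open>rC\<close> is the representative chosen for \<open>C\<close>.\<close>

definition sc_iso :: "('a::{field,finite})^2^2 \<Rightarrow> ('a^2^2 \<Rightarrow> rat) \<Rightarrow> target" where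
  "sc_iso rC f = to_target (of_nat CARD('a)) (f (mat2 1 0 0 1)) (f (mat2 0 1 (-1) 0)) (f rC)
     (f (mat2 1 1 0 1)) (f (mat2 1 0 1 1)) (f (mat2 1 1 (-1) 0)) (f (mat2 0 1 (-1) 1))"

lemma SC_C_eq_1_iff:
  "SC_C X = 1 \<longleftrightarrow> det X = 1 \<and> X$1$1 \<noteq> 0 \<and> X$1$2 \<noteq> 0 \<and> X$2$1 \<noteq> 0 \<and> X$2$2 \<noteq> 0"
  by (simp add: SC_C_def supp_sum_def)

lemma sc_iso_sc_comb:
  fixes rC :: "('a::{field,finite})^2^2"
  assumes "SC_C rC = 1"
  shows "sc_iso rC (sc_comb c1 c2 c3 c4 c5 c6 c7) = to_target (of_nat CARD('a)) c1 c2 c3 c4 c5 c6 c7"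
  using assms unfolding sc_iso_def SC_C_eq_1_iff by (simp add: sc_comb_def SC_defs supp_sum_def)

lemma sc_iso_add: "sc_iso rC (\<lambda>M. f M + g M) = sc_iso rC f + sc_iso rC g"
  unfolding sc_iso_def by (rule to_target_add)

lemma sc_iso_scale: "sc_iso rC (\<lambda>M. s * f M) = tscale s (sc_iso rC f)"
  unfolding sc_iso_def by (rule to_target_scale)

lemma sc_iso_generators:
  fixes rC :: "('a::{field,finite})^2^2"
  assumes "SC_C rC = 1"
  shows "sc_iso rC SC_A = to_target (of_nat CARD('a)) 1 0 0 0 0 0 0"
    "sc_iso rC SC_B = to_target (of_nat CARD('a)) 0 1 0 0 0 0 0"
    "sc_iso rC SC_Dp = to_target (of_nat CARD('a)) 0 0 0 1 0 0 0"
  by (simp_all only: SC_basis_eq_sc_comb sc_iso_sc_comb[OF assms])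

definition mult_left_hom :: "('a::{field,finite})^2^2 \<Rightarrow> ('a^2^2 \<Rightarrow> rat) \<Rightarrow> bool" where
  "mult_left_hom rC f \<longleftrightarrow>
     (\<forall>y\<in>SC_Q. gconv f y \<in> SC_Q \<and> sc_iso rC (gconv f y) = tmult (sc_iso rC f) (sc_iso rC y))"

lemma mult_left_hom_add:
  assumes "mult_left_hom rC f" "mult_left_hom rC g"
  shows "mult_left_hom rC (\<lambda>M. f M + g M)"
  using assms unfolding mult_left_hom_def gconv_add_left by (simp add: SC_Q_add sc_iso_add tmult_add_left)

lemma mult_left_hom_scale:
  assumes "mult_left_hom rC f"
  shows "mult_left_hom rC (\<lambda>M. s * f M)"
  using assms unfolding mult_left_hom_def gconv_scale_left by (simp add: SC_Q_scale sc_iso_scale tmult_scale_left)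

lemma mult_left_hom_gconv:
  assumes "mult_left_hom rC f" "mult_left_hom rC g" "g \<in> SC_Q"
  shows "mult_left_hom rC (gconv f g)"
  using assms unfolding mult_left_hom_def gconv_assoc[symmetric] by (simp add: tmult_assoc)

lemma mult_left_hom_SC_A: "SC_C rC = 1 \<Longrightarrow> mult_left_hom rC SC_A"
  unfolding mult_left_hom_def
  by (auto elim!: SC_QE simp: gconv_SC_A_sc_comb sc_comb_in_SC_Q sc_iso_sc_comb sc_iso_generators to_target_mult_A)

lemma mult_left_hom_SC_B: "SC_C rC = 1 \<Longrightarrow> mult_left_hom rC SC_B"
  unfolding mult_left_hom_def
  by (auto elim!: SC_QE simp: gconv_SC_B_sc_comb sc_comb_in_SC_Q sc_iso_sc_comb sc_iso_generators to_target_mult_B)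

lemma mult_left_hom_SC_Dp: "SC_C rC = 1 \<Longrightarrow> mult_left_hom rC SC_Dp"
  unfolding mult_left_hom_def
  by (auto elim!: SC_QE simp: gconv_SC_Dp_sc_comb Let_def sc_comb_in_SC_Q sc_iso_sc_comb sc_iso_generators to_target_mult_Dp)

lemma SC_basis_by_generators:
  assumes "CARD('a::{field,finite}) > 2"
  defines "k \<equiv> of_nat CARD('a) - 1 :: rat"
  shows "(SC_Ep :: 'a^2^2 \<Rightarrow> rat) = (\<lambda>M. (1 / k) * gconv SC_Dp SC_B M)"
    and "(SC_Em :: 'a^2^2 \<Rightarrow> rat) = (\<lambda>M. (1 / k) * gconv SC_B SC_Dp M)"
    and "(SC_Dm :: 'a^2^2 \<Rightarrow> rat) = (\<lambda>M. (1 / k) * gconv SC_B SC_Ep M)"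
    and "(SC_C :: 'a^2^2 \<Rightarrow> rat) = (\<lambda>M. (1 / k) * gconv SC_Dp SC_Em M + (-1) * SC_Dm M)"
proof -
  have "k \<noteq> 0" using assms(1) by (simp add: k_def)
  moreover have "gconv SC_Dp SC_B = (\<lambda>M. k * (SC_Ep :: 'a^2^2 \<Rightarrow> rat) M)"
    "gconv SC_B SC_Dp = (\<lambda>M. k * (SC_Em :: 'a^2^2 \<Rightarrow> rat) M)"
    "gconv SC_B SC_Ep = (\<lambda>M. k * (SC_Dm :: 'a^2^2 \<Rightarrow> rat) M)"
    "gconv SC_Dp SC_Em = (\<lambda>M. k * (SC_C :: 'a^2^2 \<Rightarrow> rat) M + k * SC_Dm M)"
    using gconv_SC_B_sc_comb[where 'a='a, of 0 0 0 1 0 0 0, folded SC_basis_eq_sc_comb]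
      gconv_SC_B_sc_comb[where 'a='a, of 0 0 0 0 0 1 0, folded SC_basis_eq_sc_comb]
    by (simp_all add: k_def gconv_SC_Dp_SC_B gconv_SC_Dp_SC_Em sc_comb_def)
  ultimately show "(SC_Ep :: 'a^2^2 \<Rightarrow> rat) = (\<lambda>M. (1 / k) * gconv SC_Dp SC_B M)"
    "(SC_Em :: 'a^2^2 \<Rightarrow> rat) = (\<lambda>M. (1 / k) * gconv SC_B SC_Dp M)"
    "(SC_Dm :: 'a^2^2 \<Rightarrow> rat) = (\<lambda>M. (1 / k) * gconv SC_B SC_Ep M)"
    "(SC_C :: 'a^2^2 \<Rightarrow> rat) = (\<lambda>M. (1 / k) * gconv SC_Dp SC_Em M + (-1) * SC_Dm M)"
    by (simp_all add: field_simps)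
qed

lemma mult_left_hom_SC_Q:
  fixes rC :: "('a::{field,finite})^2^2"
  assumes "CARD('a) > 2" "SC_C rC = 1" "f \<in> SC_Q"
  shows "mult_left_hom rC f"
proof -
  have A: "mult_left_hom rC SC_A" and B: "mult_left_hom rC SC_B" and Dp: "mult_left_hom rC SC_Dp"
    using assms(2) by (simp_all add: mult_left_hom_SC_A mult_left_hom_SC_B mult_left_hom_SC_Dp)
  note closure = mult_left_hom_add mult_left_hom_scale mult_left_hom_gconv SC_basis_in_SC_Q
  have Ep: "mult_left_hom rC SC_Ep"
    by (subst SC_basis_by_generators(1)[OF assms(1)]) (intro closure Dp B)
  have Em: "mult_left_hom rC SC_Em"
    by (subst SC_basis_by_generators(2)[OF assms(1)]) (intro closure Dp B)
  have Dm: "mult_left_hom rC SC_Dm"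
    by (subst SC_basis_by_generators(3)[OF assms(1)]) (intro closure Ep B)
  have C: "mult_left_hom rC SC_C"
    by (subst SC_basis_by_generators(4)[OF assms(1)]) (intro closure Dp Em Dm)
  from assms(3) show ?thesis
    by (elim SC_QE) (simp only: sc_comb_def, intro closure A B C Dp Dm Ep Em)
qed

lemma bij_betw_sc_iso:
  fixes rC :: "('a::{field,finite})^2^2"
  assumes "CARD('a) > 2" "SC_C rC = 1"
  shows "bij_betw (sc_iso rC) SC_Q UNIV"
proof -
  let ?q = "of_nat CARD('a) :: rat"
  have q: "?q > 2" using assms(1) by simp
  have "inj_on (sc_iso rC) SC_Q"
  proof (rule inj_onI)
    fix x y assume "x \<in> SC_Q" "y \<in> SC_Q" and iso_eq: "sc_iso rC x = sc_iso rC y"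
    then obtain c1 c2 c3 c4 c5 c6 c7 d1 d2 d3 d4 d5 d6 d7 where
      x: "x = sc_comb c1 c2 c3 c4 c5 c6 c7" and y: "y = sc_comb d1 d2 d3 d4 d5 d6 d7"
      by (metis SC_QE)
    have "from_target ?q (to_target ?q c1 c2 c3 c4 c5 c6 c7) = from_target ?q (to_target ?q d1 d2 d3 d4 d5 d6 d7)"
      using iso_eq by (simp only: x y sc_iso_sc_comb[OF assms(2)])
    then show "x = y" by (simp add: x y from_target_to_target[OF q])
  qed
  moreover have "t \<in> sc_iso rC ` SC_Q" for t
  proof -
    let ?c = "from_target ?q t"
    have "t = sc_iso rC (sc_comb (?c ! 0) (?c ! 1) (?c ! 2) (?c ! 3) (?c ! 4) (?c ! 5) (?c ! 6))"
      by (simp only: sc_iso_sc_comb[OF assms(2)] to_target_from_target[OF q])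
    then show ?thesis using sc_comb_in_SC_Q by blast
  qed
  ultimately show ?thesis by (auto simp: bij_betw_def)
qed

lemma sc_iso_unit:
  fixes rC :: "('a::{field,finite})^2^2"
  assumes "CARD('a) > 2" "SC_C rC = 1"
  shows "sc_iso rC (\<lambda>M. SC_A M / (of_nat CARD('a) - 1)) = tone"
proof -
  have unit: "(\<lambda>M. SC_A M / (of_nat CARD('a) - 1)) = sc_comb (1 / (of_nat CARD('a) - 1)) 0 0 0 0 0 0"
    by (simp add: sc_comb_def)
  have "(of_nat CARD('a) - 1 :: rat) \<noteq> 0" using assms(1) by simp
  then show ?thesis unfolding unit sc_iso_sc_comb[OF assms(2)]
    by (simp add: to_target_def tone_def vec2_2_eq_iff mat_def)
qed

lemma ex_SC_C_eq_1:
  assumes "CARD('a) > 2"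
  obtains rC :: "('a::{field,finite})^2^2" where "SC_C rC = 1"
proof -
  have "card ({0, -1} :: 'a set) \<le> 2" by (rule card_insert_le_m1) simp_all
  then have "{0, -1} \<noteq> (UNIV :: 'a set)" using assms by (metis not_le)
  then obtain z :: 'a where z: "z \<noteq> 0" "z \<noteq> -1" by auto
  then have "1 + z \<noteq> 0" by (metis add.commute add_eq_0_iff)
  with z have "SC_C (mat2 1 1 z (1 + z)) = 1" by (simp add: SC_C_eq_1_iff)
  then show ?thesis by (rule that)
qed

theorem theorem3p1:
  assumes "CARD('a::{field,finite}) > 2"
  shows "(\<forall>x\<in>(SC_Q :: (('a^2^2) \<Rightarrow> rat) set). \<forall>y\<in>SC_Q. gconv x y \<in> SC_Q) \<and>
         (\<exists>\<phi> :: ('a^2^2 \<Rightarrow> rat) \<Rightarrow> target.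
            bij_betw \<phi> SC_Q UNIV \<and>
            (\<forall>x\<in>SC_Q. \<forall>y\<in>SC_Q. \<phi> (\<lambda>M. x M + y M) = \<phi> x + \<phi> y) \<and>
            (\<forall>c. \<forall>x\<in>SC_Q. \<phi> (\<lambda>M. c * x M) = tscale c (\<phi> x)) \<and>
            (\<forall>x\<in>SC_Q. \<forall>y\<in>SC_Q. \<phi> (gconv x y) = tmult (\<phi> x) (\<phi> y)) \<and>
            \<phi> (\<lambda>M. SC_A M / (of_nat CARD('a) - 1)) = tone)"
proof -
  obtain rC :: "'a^2^2" where rC: "SC_C rC = 1" using ex_SC_C_eq_1[OF assms] .
  have hom: "mult_left_hom rC x" if "x \<in> SC_Q" for x
    using mult_left_hom_SC_Q[OF assms rC that] .
  show ?thesis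
  proof (intro conjI exI[of _ "sc_iso rC"] ballI allI)
    show "gconv x y \<in> SC_Q" "sc_iso rC (gconv x y) = tmult (sc_iso rC x) (sc_iso rC y)"
      if "x \<in> SC_Q" "y \<in> SC_Q" for x y
      using hom[OF that(1)] that(2) unfolding mult_left_hom_def by blast+
  qed (simp_all add: bij_betw_sc_iso[OF assms rC] sc_iso_add sc_iso_scale sc_iso_unit[OF assms rC])
qed

end
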